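(* Let $F=\{f_i\}_{i=1}^N$ be a tight frame for an $n$-dimensional Hilbert space $\mathcal{H}_n$ and let $p>1$. If $S_F^{-1}F\in\zeta_{\mathcal{N}}^{(1),p}(F)$, then $S_F^{-1}F\in\zeta_{\mathfrak{F}}^{(1),p}(F)$.
   Context: $F$ is tight if $\sum_i|\langle f,f_i\rangle|^2=A\|f\|^2$ for all $f$ and some $A>0$; $S_F$ is the frame operator $S_Ff=\sum_i\langle f,f_i\rangle f_i$ and $S_F^{-1}F=\{S_F^{-1}f_i\}$ the canonical dual. $G=\{g_i\}$ is a dual of $F$ if $f=\sum_i\langle f,f_i\rangle g_i$ for all $f$. For a dual $G$: $\mathrm{AE}_{\mathfrak{F}}^{(1),p}(F,G)=\{\frac1N\sum_i(\|f_i\|\|g_i\|)^p\}^{1/p}$ (the $\ell^p$-average of Frobenius norms of the one-erasure error operators $f\mapsto\langle f,f_i\rangle g_i$), and $\mathrm{AE}_{\mathcal{N}}^{(1),p}(F,G)=\{\frac1N\sum_i\omega(E_i)^p\}^{1/p}$ where $E_if=\langle f,f_i\rangle g_i$ and $\omega(T)=\sup_{\|f\|=1}|\langle Tf,f\rangle|$ is the numerical radius (so $\omega(E_i)=\frac{|\langle f_i,g_i\rangle|+\|f_i\|\|g_i\|}{2}$). $\zeta_{\mathfrak{F}}^{(1),p}(F)$ (resp. $\zeta_{\mathcal{N}}^{(1),p}(F)$) is the set of duals of $F$ minimizing $\mathrm{AE}_{\mathfrak{F}}^{(1),p}(F,\cdot)$ (resp. $\mathrm{AE}_{\mathcal{N}}^{(1),p}(F,\cdot)$)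 over all duals. *)

theory Defs
  imports "HOL-Analysis.Analysis"
begin

text \<open>The n-dimensional (complex) Hilbert space H_n is modelled as complex ^ 'n,
  with 'n a finite index type (n = CARD('n)). The norm is the library's Euclidean
  norm on complex ^ 'n, which is induced by the inner product cinner below.
  A finite family F = {f_i}, i = 1..N, is a function f :: nat => complex ^ 'n
  on the indices {..<N}.\<close>

definition cinner :: "complex ^ 'n \<Rightarrow> complex ^ 'n \<Rightarrow> complex" where
  "cinner x y = (\<Sum>j\<in>UNIV. x $ j * cnj (y $ j))"

definition tight_frame :: "nat \<Rightarrow> (nat \<Rightarrow> complex ^ 'n) \<Rightarrow> bool" where
  "tight_frame N f \<longleftrightarrow>
     (\<exists>A>0. \<forall>x. (\<Sum>i<N. (cmod (cinner x (f i)))\<^sup>2) = A * (norm x)\<^sup>2)"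

definition frame_op :: "nat \<Rightarrow> (nat \<Rightarrow> complex ^ 'n) \<Rightarrow> complex ^ 'n \<Rightarrow> complex ^ 'n" where
  "frame_op N f x = (\<Sum>i<N. cinner x (f i) *s f i)"

definition canonical_dual :: "nat \<Rightarrow> (nat \<Rightarrow> complex ^ 'n) \<Rightarrow> nat \<Rightarrow> complex ^ 'n" where
  "canonical_dual N f i = inv (frame_op N f) (f i)"

definition is_dual :: "nat \<Rightarrow> (nat \<Rightarrow> complex ^ 'n) \<Rightarrow> (nat \<Rightarrow> complex ^ 'n) \<Rightarrow> bool" where
  "is_dual N f g \<longleftrightarrow> (\<forall>x. x = (\<Sum>i<N. cinner x (f i) *s g i))"

definition erasure_op :: "(nat \<Rightarrow> complex ^ 'n) \<Rightarrow> (nat \<Rightarrow> complex ^ 'n) \<Rightarrow> nat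
    \<Rightarrow> complex ^ 'n \<Rightarrow> complex ^ 'n" where
  "erasure_op f g i x = cinner x (f i) *s g i"

definition num_radius :: "(complex ^ 'n \<Rightarrow> complex ^ 'n) \<Rightarrow> real" where
  "num_radius T = (SUP x\<in>{x. norm x = 1}. cmod (cinner (T x) x))"

definition AE_Frob :: "real \<Rightarrow> nat \<Rightarrow> (nat \<Rightarrow> complex ^ 'n) \<Rightarrow> (nat \<Rightarrow> complex ^ 'n) \<Rightarrow> real" where
  "AE_Frob p N f g = ((1 / real N) * (\<Sum>i<N. (norm (f i) * norm (g i)) powr p)) powr (1 / p)"

definition AE_NumRad :: "real \<Rightarrow> nat \<Rightarrow> (nat \<Rightarrow> complex ^ 'n) \<Rightarrow> (nat \<Rightarrow> complex ^ 'n) \<Rightarrow> real" where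
  "AE_NumRad p N f g = ((1 / real N) * (\<Sum>i<N. (num_radius (erasure_op f g i)) powr p)) powr (1 / p)"

definition zeta_Frob :: "real \<Rightarrow> nat \<Rightarrow> (nat \<Rightarrow> complex ^ 'n) \<Rightarrow> (nat \<Rightarrow> complex ^ 'n) set" where
  "zeta_Frob p N f = {g. is_dual N f g \<and> (\<forall>h. is_dual N f h \<longrightarrow> AE_Frob p N f g \<le> AE_Frob p N f h)}"

definition zeta_NumRad :: "real \<Rightarrow> nat \<Rightarrow> (nat \<Rightarrow> complex ^ 'n) \<Rightarrow> (nat \<Rightarrow> complex ^ 'n) set" where
  "zeta_NumRad p N f = {g. is_dual N f g \<and> (\<forall>h. is_dual N f h \<longrightarrow> AE_NumRad p N f g \<le> AE_NumRad p N f h)}"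

end

theory Submission imports Defs begin

text \<open>For a tight frame with bound A the frame operator is A times the identity (polarization),
  so the canonical dual is f_i / A. Each one-erasure operator x \<mapsto> <x,f_i> g_i has numerical
  radius at most ||f_i|| ||g_i|| by Cauchy-Schwarz, with equality when g_i is a nonnegative
  multiple of f_i (test with x = f_i / ||f_i||). Hence the numerical-radius error is dominated
  by the Frobenius error for every dual and coincides with it at the canonical dual, so
  minimality of the canonical dual for the former gives minimality for the latter.\<close>

lemma cinner_add_left: "cinner (x + y) z = cinner x z + cinner y z"
  by (simp add: cinner_def sum.distrib distrib_right)

lemma cinner_add_right: "cinner x (y + z) = cinner x y + cinner x z"
  by (simp add: cinner_def sum.distrib distrib_left)

lemma cinner_diff_left: "cinner (x - y) z = cinner x z - cinner y z"
  by (simp add: cinner_def sum_subtractf left_diff_distrib)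

lemma cinner_scale_left: "cinner (c *s x) z = c * cinner x z"
  by (simp add: cinner_def sum_distrib_left mult.assoc)

lemma cinner_scale_right: "cinner x (c *s z) = cnj c * cinner x z"
  by (simp add: cinner_def sum_distrib_left algebra_simps)

lemma cinner_sum_left: "cinner (\<Sum>i\<in>I. u i) z = (\<Sum>i\<in>I. cinner (u i) z)"
  by (simp add: cinner_def sum_distrib_right) (rule sum.swap)

lemma cnj_cinner: "cnj (cinner x y) = cinner y x"
  by (simp add: cinner_def mult.commute)

lemma norm_vec_power2: "(norm (x::complex^'n))\<^sup>2 = (\<Sum>j\<in>UNIV. (cmod (x $ j))\<^sup>2)"
  unfolding norm_vec_def L2_set_def by (simp add: sum_nonneg)

lemma cinner_self: "cinner x x = complex_of_real ((norm x)\<^sup>2)"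
  unfolding norm_vec_power2 cinner_def of_real_sum complex_norm_square by simp

lemma cinner_Cauchy_Schwarz: "cmod (cinner x y) \<le> norm x * norm y"
proof -
  have "cmod (cinner x y) \<le> (\<Sum>j\<in>UNIV. cmod (x $ j * cnj (y $ j)))"
    unfolding cinner_def by (rule norm_sum)
  also have "\<dots> = (\<Sum>j\<in>UNIV. \<bar>cmod (x $ j)\<bar> * \<bar>cmod (y $ j)\<bar>)"
    by (simp add: norm_mult)
  also have "\<dots> \<le> L2_set (\<lambda>j. cmod (x $ j)) UNIV * L2_set (\<lambda>j. cmod (y $ j)) UNIV"
    by (rule L2_set_mult_ineq)
  finally show ?thesis by (simp add: norm_vec_def)
qed

lemma of_real_vector_scale: "complex_of_real r *s (v::complex^'n) = r *\<^sub>R v"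
  by (simp add: vec_eq_iff) (simp add: scaleR_conv_of_real)

lemma sesquilinear_zero_on_diagonal:
  fixes C :: "complex^'n \<Rightarrow> complex^'n \<Rightarrow> complex"
  assumes add_left: "\<And>x y z. C (x + y) z = C x z + C y z"
    and add_right: "\<And>x y z. C x (y + z) = C x y + C x z"
    and scale_left: "\<And>c x y. C (c *s x) y = c * C x y"
    and scale_right: "\<And>c x y. C x (c *s y) = cnj c * C x y"
    and diagonal: "\<And>x. C x x = 0"
  shows "C x y = 0"
proof -
  have antisym: "C u v + C v u = 0" for u v
  proof -
    have "C (u + v) (u + v) = C u u + C u v + (C v u + C v v)"
      by (simp add: add_left add_right)
    then show ?thesis
      by (simp add: diagonal)
  qed
  have "C x (\<i> *s y) + C (\<i> *s y) x = 0"
    by (rule antisym)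
  then have "C y x = C x y"
    by (simp add: scale_left scale_right algebra_simps)
  with antisym[of x y] show ?thesis
    by simp
qed

lemma cinner_frame_op_left: "cinner (frame_op N f x) y = (\<Sum>i<N. cinner x (f i) * cinner (f i) y)"
  by (simp add: frame_op_def cinner_sum_left cinner_scale_left)

lemma frame_op_eq_scale_if_tight:
  assumes tight: "\<And>x. (\<Sum>i<N. (cmod (cinner x (f i)))\<^sup>2) = A * (norm x)\<^sup>2"
  shows "frame_op N f x = of_real A *s x"
proof -
  define C where "C u v = cinner (frame_op N f u) v - of_real A * cinner u v" for u v
  have "C u v = 0" for u v
  proof (rule sesquilinear_zero_on_diagonal[of C])
    show "C (x + y) z = C x z + C y z" for x y z
      by (simp add: C_def cinner_frame_op_left cinner_add_left sum.distrib algebra_simps)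
    show "C x (y + z) = C x y + C x z" for x y z
      by (simp add: C_def cinner_frame_op_left cinner_add_right sum.distrib algebra_simps)
    show "C (c *s x) y = c * C x y" for c x y
      by (simp add: C_def cinner_frame_op_left cinner_scale_left sum_distrib_left algebra_simps)
    show "C x (c *s y) = cnj c * C x y" for c x y
      by (simp add: C_def cinner_frame_op_left cinner_scale_right sum_distrib_left algebra_simps)
  next
    fix w
    have "cinner (frame_op N f w) w = of_real (\<Sum>i<N. (cmod (cinner w (f i)))\<^sup>2)"
      unfolding cinner_frame_op_left of_real_sum complex_norm_square
      by (simp add: cnj_cinner)
    then show "C w w = 0"
      by (simp add: C_def tight cinner_self)
  qed
  then have "cinner (frame_op N f x - of_real A *s x) (frame_op N f x - of_real A *s x) = 0"
    by (simp add: C_def cinner_diff_left cinner_scale_left)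
  then show ?thesis
    by (simp add: cinner_self)
qed

lemma canonical_dual_tight_frame:
  assumes "tight_frame N f"
  obtains A where "A > 0" and "canonical_dual N f = (\<lambda>i. of_real A *s f i)"
proof -
  obtain B where "B > 0" and "\<And>x. (\<Sum>i<N. (cmod (cinner x (f i)))\<^sup>2) = B * (norm x)\<^sup>2"
    using assms unfolding tight_frame_def by blast
  then have S: "frame_op N f x = of_real B *s x" for x
    using frame_op_eq_scale_if_tight by blast
  have "inj (frame_op N f)"
    by (rule injI) (use \<open>B > 0\<close> in \<open>simp add: S vec_eq_iff\<close>)
  moreover have "frame_op N f (of_real (1/B) *s f i) = f i" for i
    using \<open>B > 0\<close> by (simp add: S vec_eq_iff)
  ultimately have "canonical_dual N f = (\<lambda>i. of_real (1/B) *s f i)"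
    unfolding canonical_dual_def by (auto intro: inv_f_eq)
  with \<open>B > 0\<close> show thesis
    by (intro that[of "1/B"]) simp_all
qed

lemma cmod_cinner_erasure_op_le:
  assumes "norm x = 1"
  shows "cmod (cinner (erasure_op f g i x) x) \<le> norm (f i) * norm (g i)"
proof -
  have "cmod (cinner (erasure_op f g i x) x) = cmod (cinner x (f i)) * cmod (cinner (g i) x)"
    by (simp add: erasure_op_def cinner_scale_left norm_mult)
  also have "\<dots> \<le> (norm x * norm (f i)) * (norm (g i) * norm x)"
    by (intro mult_mono cinner_Cauchy_Schwarz) auto
  finally show ?thesis
    using assms by simp
qed

lemma exists_unit_vector: "\<exists>x::complex^'n. norm x = 1"
  by (rule exI[of _ "axis undefined 1"]) simp

lemma num_radius_erasure_op_le: "num_radius (erasure_op f g i) \<le> norm (f i) * norm (g i)"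
  unfolding num_radius_def
  using exists_unit_vector cmod_cinner_erasure_op_le by (auto intro!: cSUP_least)

lemma num_radius_erasure_op_ge:
  assumes "norm x = 1"
  shows "cmod (cinner (erasure_op f g i x) x) \<le> num_radius (erasure_op f g i)"
  unfolding num_radius_def
  using assms cmod_cinner_erasure_op_le by (intro cSUP_upper bdd_aboveI) auto

lemma num_radius_erasure_op_nonneg: "0 \<le> num_radius (erasure_op f g i)"
  using exists_unit_vector num_radius_erasure_op_ge norm_ge_zero order_trans by metis

lemma num_radius_erasure_op_nonneg_multiple:
  assumes "c \<ge> 0" and g: "g i = of_real c *s f i"
  shows "num_radius (erasure_op f g i) = norm (f i) * norm (g i)"
proof (rule antisym[OF num_radius_erasure_op_le])
  show "norm (f i) * norm (g i) \<le> num_radius (erasure_op f g i)"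
  proof (cases "f i = 0")
    case True
    then show ?thesis
      using num_radius_erasure_op_nonneg by simp
  next
    case False
    define r where "r = norm (f i)"
    define u where "u = of_real (1/r) *s f i"
    have "r > 0"
      using False by (simp add: r_def)
    have "norm u = 1"
      using \<open>r > 0\<close> unfolding u_def of_real_vector_scale by (simp add: r_def)
    have "cinner (erasure_op f g i u) u = of_real c * (cinner u (f i) * cinner (f i) u)"
      by (simp add: erasure_op_def g cinner_scale_left)
    also have "\<dots> = of_real (c * r\<^sup>2)"
      using \<open>r > 0\<close> by (simp add: u_def cinner_scale_left cinner_scale_right cinner_self
          r_def power2_eq_square field_simps)
    finally have "cmod (cinner (erasure_op f g i u) u) = c * r\<^sup>2"
      using \<open>c \<ge> 0\<close> by (simp only: norm_of_real) simp
    moreover have "norm (g i) = c * r"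
      using \<open>c \<ge> 0\<close> by (simp add: g of_real_vector_scale r_def)
    ultimately show ?thesis
      using num_radius_erasure_op_ge[OF \<open>norm u = 1\<close>, of f g i]
      by (simp add: r_def power2_eq_square mult_ac)
  qed
qed

lemma AE_NumRad_le_AE_Frob:
  assumes "p \<ge> 0"
  shows "AE_NumRad p N f g \<le> AE_Frob p N f g"
  unfolding AE_Frob_def AE_NumRad_def using assms
  by (intro powr_mono2 mult_left_mono sum_mono sum_nonneg num_radius_erasure_op_le
      num_radius_erasure_op_nonneg mult_nonneg_nonneg) auto

lemma AE_Frob_eq_AE_NumRad:
  assumes "\<And>i. num_radius (erasure_op f g i) = norm (f i) * norm (g i)"
  shows "AE_Frob p N f g = AE_NumRad p N f g"
  by (simp add: AE_Frob_def AE_NumRad_def assms)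

lemma zeta_Frob_if_zeta_NumRad_and_AE_eq:
  assumes "p \<ge> 0" and "g \<in> zeta_NumRad p N f" and "AE_Frob p N f g = AE_NumRad p N f g"
  shows "g \<in> zeta_Frob p N f"
proof -
  have "AE_Frob p N f g \<le> AE_Frob p N f h" if "is_dual N f h" for h
  proof -
    have "AE_Frob p N f g = AE_NumRad p N f g"
      by (fact assms(3))
    also have "\<dots> \<le> AE_NumRad p N f h"
      using assms(2) that unfolding zeta_NumRad_def by blast
    also have "\<dots> \<le> AE_Frob p N f h"
      using AE_NumRad_le_AE_Frob[OF assms(1)] .
    finally show ?thesis .
  qed
  with assms(2) show ?thesis
    unfolding zeta_NumRad_def zeta_Frob_def by blast
qed

theorem proposition4p3:
  fixes N :: nat and f :: "nat \<Rightarrow> complex ^ 'n" and p :: real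
  assumes "tight_frame N f"
    and "p > 1"
    and "canonical_dual N f \<in> zeta_NumRad p N f"
  shows "canonical_dual N f \<in> zeta_Frob p N f"
proof -
  obtain A where "A > 0" and dual: "canonical_dual N f = (\<lambda>i. of_real A *s f i)"
    using canonical_dual_tight_frame[OF assms(1)] .
  have "num_radius (erasure_op f (canonical_dual N f) i)
      = norm (f i) * norm (canonical_dual N f i)" for i
    using \<open>A > 0\<close> by (intro num_radius_erasure_op_nonneg_multiple[of A]) (simp_all add: dual)
  then have "AE_Frob p N f (canonical_dual N f) = AE_NumRad p N f (canonical_dual N f)"
    by (rule AE_Frob_eq_AE_NumRad)
  with assms(2,3) show ?thesis
    by (intro zeta_Frob_if_zeta_NumRad_and_AE_eq) simp_all
qed

end
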